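(* Let $p$ be a prime and let $\Lambda$ be a finite, simple, connected graph with at least $3$ vertices such that $|\mathrm{V}(\Lambda)|$ and $|\mathrm{E}(\Lambda)|$ are both powers of $p$. Let $G\le\mathrm{Aut}(\Lambda)$ be transitive on both $\mathrm{V}(\Lambda)$ and $\mathrm{E}(\Lambda)$. Then $G$ contains an element which acts semiregularly on each of $\mathrm{V}(\Lambda)$ and $\mathrm{E}(\Lambda)$.
   Context: A non-identity element $g$ acts semiregularly on a set if the cyclic group $\langle g\rangle$ acts on it with all point stabilisers trivial. *)

theory Defs
  imports "HOL-Algebra.Algebra"
begin

definition simple_graph :: "'a set \<Rightarrow> 'a set set \<Rightarrow> bool" where
  "simple_graph V E \<longleftrightarrow> finite V \<and> (\<forall>e\<in>E. e \<subseteq> V \<and> card e = 2)"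

definition adj :: "'a set set \<Rightarrow> 'a \<Rightarrow> 'a \<Rightarrow> bool" where
  "adj E x y \<longleftrightarrow> {x, y} \<in> E"

definition connected_graph :: "'a set \<Rightarrow> 'a set set \<Rightarrow> bool" where
  "connected_graph V E \<longleftrightarrow> V \<noteq> {} \<and>
     (\<forall>x\<in>V. \<forall>y\<in>V. (x, y) \<in> {(u, v). adj E u v}\<^sup>*)"

definition graph_aut :: "'a set \<Rightarrow> 'a set set \<Rightarrow> ('a \<Rightarrow> 'a) set" where
  "graph_aut V E = {g \<in> Bij V. \<forall>x\<in>V. \<forall>y\<in>V. {x, y} \<in> E \<longleftrightarrow> {g x, g y} \<in> E}"

definition is_prime_power :: "nat \<Rightarrow> nat \<Rightarrow> bool" where
  "is_prime_power p n \<longleftrightarrow> (\<exists>k. n = p ^ k)"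

definition semiregular_on_vertices :: "'a set \<Rightarrow> ('a \<Rightarrow> 'a) \<Rightarrow> bool" where
  "semiregular_on_vertices V g \<longleftrightarrow>
     g \<noteq> \<one>\<^bsub>BijGroup V\<^esub> \<and>
     (\<forall>k::nat. \<forall>x\<in>V. (g [^]\<^bsub>BijGroup V\<^esub> k) x = x \<longrightarrow> g [^]\<^bsub>BijGroup V\<^esub> k = \<one>\<^bsub>BijGroup V\<^esub>)"

definition semiregular_on_edges :: "'a set \<Rightarrow> 'a set set \<Rightarrow> ('a \<Rightarrow> 'a) \<Rightarrow> bool" where
  "semiregular_on_edges V E g \<longleftrightarrow>
     g \<noteq> \<one>\<^bsub>BijGroup V\<^esub> \<and>
     (\<forall>k::nat. \<forall>e\<in>E. (g [^]\<^bsub>BijGroup V\<^esub> k) ` e = e \<longrightarrow> g [^]\<^bsub>BijGroup V\<^esub> k = \<one>\<^bsub>BijGroup V\<^esub>)"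

end

theory Submission
  imports Defs
begin

text \<open>
  Since the numbers of vertices and of edges are powers of p, a Sylow p-subgroup P of G is still
  transitive on vertices and on edges: the stabiliser in P of a point x has p-power order dividing
  the order of the stabiliser G_x, whose p-part is at most the order of P divided by the size of
  the G-orbit of x, so the P-orbit of x is the whole G-orbit. As a nontrivial
  p-group, P has a nontrivial central element z. Every power of z centralises the transitive
  group P, so if it fixes one vertex it fixes all of them, and if it fixes one edge it fixes all
  edges; in the latter case, as some vertex x lies on two edges {x,y} and {x,w}, it cannot move x
  either. Hence z acts semiregularly on both V and E.
\<close>

lemma (in group_action) orbit_eq_singleton_iff:
  assumes "x \<in> E"
  shows "orbit G \<phi> x = {x} \<longleftrightarrow> (\<forall>g\<in>carrier G. \<phi> g x = x)"
  using orbit_refl[OF assms] unfolding orbit_def by auto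

lemma (in group_action) card_singleton_orbits:
  "card {orb \<in> orbits G E \<phi>. card orb = 1} = card {x \<in> E. \<forall>g\<in>carrier G. \<phi> g x = x}"
proof -
  have "{orb \<in> orbits G E \<phi>. card orb = 1} = (\<lambda>x. {x}) ` {x \<in> E. \<forall>g\<in>carrier G. \<phi> g x = x}"
  proof (intro equalityI subsetI)
    fix orb assume "orb \<in> {orb \<in> orbits G E \<phi>. card orb = 1}"
    then obtain x where x: "x \<in> E" "orb = orbit G \<phi> x" "card orb = 1"
      unfolding orbits_def by auto
    with orbit_refl have orb: "orbit G \<phi> x = {x}" by (metis card_1_singletonE singletonD)
    with x have "\<forall>g\<in>carrier G. \<phi> g x = x" using orbit_eq_singleton_iff by blast
    with x orb show "orb \<in> (\<lambda>x. {x}) ` {x \<in> E. \<forall>g\<in>carrier G. \<phi> g x = x}" by blast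
  next
    fix orb assume "orb \<in> (\<lambda>x. {x}) ` {x \<in> E. \<forall>g\<in>carrier G. \<phi> g x = x}"
    then obtain x where "x \<in> E" "orbit G \<phi> x = {x}" "orb = {x}"
      using orbit_eq_singleton_iff by auto
    thus "orb \<in> {orb \<in> orbits G E \<phi>. card orb = 1}" unfolding orbits_def by auto
  qed
  thus ?thesis by (simp add: card_image)
qed

lemma (in group_action) card_fixed_points_mod_prime:
  assumes p: "Factorial_Ring.prime p" and ord: "order G = p ^ n" and fin: "finite E"
  shows "card {x \<in> E. \<forall>g\<in>carrier G. \<phi> g x = x} mod p = card E mod p"
proof -
  let ?O = "orbits G E \<phi>"
  have orbit_mod: "card orb mod p = (if card orb = 1 then 1 else 0) mod p" if "orb \<in> ?O" for orb
  proof -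
    from that obtain x where "x \<in> E" "orb = orbit G \<phi> x" unfolding orbits_def by auto
    hence "card orb dvd p ^ n"
      using orbit_stabilizer_theorem ord by (metis dvd_triv_left)
    then obtain j where "card orb = p ^ j" using divides_primepow_nat[OF p] by blast
    thus ?thesis by (cases j) auto
  qed
  have "card E = (\<Sum>orb\<in>?O. card orb)"
    using disjoint_sum[OF fin, of "\<lambda>_. 1::nat"] by simp
  also have "\<dots> mod p = (\<Sum>orb\<in>?O. if card orb = 1 then 1 else 0) mod p"
    using orbit_mod by (metis (no_types, lifting) mod_sum_eq sum.cong)
  also have "(\<Sum>orb\<in>?O. if card orb = 1 then 1 else 0) = card {orb \<in> ?O. card orb = 1}"
    using fin by (simp add: sum.If_cases Collect_conj_eq orbits_def)
  finally show ?thesis using card_singleton_orbits by simp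
qed

lemma (in group) prime_power_order_center_nontrivial:
  assumes p: "Factorial_Ring.prime p" and ord: "order G = p ^ n" and nontriv: "carrier G \<noteq> {\<one>}"
  obtains z where "z \<in> carrier G" "z \<noteq> \<one>" "\<forall>g\<in>carrier G. g \<otimes> z = z \<otimes> g"
proof -
  interpret conj: group_action G "carrier G" "\<lambda>g. \<lambda>h\<in>carrier G. g \<otimes> h \<otimes> inv g"
    by (rule action_by_conjugation)
  let ?Z = "{z \<in> carrier G. \<forall>g\<in>carrier G. (\<lambda>h\<in>carrier G. g \<otimes> h \<otimes> inv g) z = z}"
  have fin: "finite (carrier G)"
    using ord p order_gt_0_iff_finite by (simp add: prime_gt_0_nat)
  have "n \<noteq> 0"
  proof
    assume "n = 0"
    hence "card (carrier G) = 1" using ord by (simp add: order_def)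
    thus False using nontriv one_closed by (metis card_1_singletonE singletonD)
  qed
  hence "p dvd card (carrier G)" using ord by (simp add: order_def)
  hence "p dvd card ?Z"
    using conj.card_fixed_points_mod_prime[OF p ord fin] by (simp add: mod_eq_0_iff_dvd[symmetric])
  moreover have "\<one> \<in> ?Z" and finZ: "finite ?Z" using fin by simp_all
  hence "card ?Z > 0" by (auto simp: card_gt_0_iff)
  ultimately have "p \<le> card ?Z" by (simp add: dvd_imp_le)
  hence "\<not> card ?Z \<le> 1" using prime_gt_1_nat[OF p] by linarith
  then obtain z where z: "z \<in> ?Z" "z \<noteq> \<one>"
    using card_le_Suc0_iff_eq[OF finZ] \<open>\<one> \<in> ?Z\<close> by auto
  have "g \<otimes> z = z \<otimes> g" if g: "g \<in> carrier G" for g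
  proof -
    have "z \<in> carrier G" "g \<otimes> z \<otimes> inv g = z" using z g by auto
    thus ?thesis using g by (metis inv_solve_right m_closed)
  qed
  with z that show ?thesis by blast
qed

lemma prime_power_dvd_mult_coprime_imp_le:
  fixes p :: nat
  assumes p: "Factorial_Ring.prime p" and "\<not> p dvd m" and "p ^ k dvd p ^ a * m"
  shows "k \<le> a"
proof -
  have "coprime (p ^ k) m" using assms(1,2) by (simp add: coprime_power_left_iff prime_imp_coprime)
  hence "p ^ k dvd p ^ a" using assms(3) coprime_dvd_mult_left_iff by blast
  thus ?thesis using prime_ge_2_nat[OF p] by (simp add: dvd_power_iff_le)
qed

lemma (in group) obtain_sylow_subgroup:
  assumes p: "Factorial_Ring.prime p" and fin: "finite (carrier G)"
  obtains P a m where "subgroup P G" "card P = p ^ a" "order G = p ^ a * m" "\<not> p dvd m"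
proof -
  have "order G \<noteq> 0" using fin order_gt_0_iff_finite by auto
  moreover have "\<not> is_unit p" using p not_prime_unit by blast
  ultimately obtain m where "order G = p ^ multiplicity p (order G) * m" "\<not> p dvd m"
    by (rule multiplicity_decompose')
  with sylow_thm[OF p is_group _ fin] that show ?thesis by blast
qed

lemma (in group) card_subgroup_dvd:
  assumes H: "subgroup H G" and K: "subgroup K G" "K \<subseteq> H"
  shows "card K dvd card H"
proof -
  have "subgroup K (G\<lparr>carrier := H\<rparr>)" using subgroup_incl[OF K(1) H K(2)] .
  hence "card (rcosets\<^bsub>G\<lparr>carrier := H\<rparr>\<^esub> K) * card K = card H"
    using group.lagrange[OF subgroup_imp_group[OF H]] by (simp add: order_def)
  thus ?thesis by (metis dvd_triv_right)
qed

lemma (in group_action) sylow_subgroup_transitive: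
  assumes p: "Factorial_Ring.prime p" and ord: "order G = p ^ a * m" and "\<not> p dvd m"
    and P: "subgroup P G" "card P = p ^ a" and cE: "card E = p ^ k"
    and tr: "\<forall>x\<in>E. \<forall>y\<in>E. \<exists>g\<in>carrier G. \<phi> g x = y"
    and x: "x \<in> E" and y: "y \<in> E"
  shows "\<exists>g\<in>P. \<phi> g x = y"
proof -
  interpret grp: group G using group_hom group_hom.axioms(1) by blast
  interpret PE: group_action "G\<lparr>carrier := P\<rparr>" E \<phi> using induced_action[OF P(1)] .
  let ?S = "stabilizer G \<phi> x" and ?T = "stabilizer (G\<lparr>carrier := P\<rparr>) \<phi> x"
  let ?orbP = "orbit (G\<lparr>carrier := P\<rparr>) \<phi> x"
  have "orbit G \<phi> x = E"
  proof
    show "orbit G \<phi> x \<subseteq> E" unfolding orbit_def using x element_image by blast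
    show "E \<subseteq> orbit G \<phi> x" unfolding orbit_def using tr x by fastforce
  qed
  hence cS: "card E * card ?S = p ^ a * m"
    using orbit_stabilizer_theorem[OF x] ord by simp
  have cT: "card ?orbP * card ?T = p ^ a"
    using PE.orbit_stabilizer_theorem[OF x] P(2) by (simp add: order_def)
  have S: "subgroup ?S G" using stabilizer_subgroup[OF x] .
  have "?T = P \<inter> ?S" using subgroup.subset[OF P(1)] by (auto simp: stabilizer_def)
  hence "card ?T dvd card ?S"
    using grp.card_subgroup_dvd[OF S grp.subgroups_Inter_pair[OF P(1) S]] by simp
  \<comment> \<open>the stabiliser of x in P has p-power order dividing p^(a-k) m,
    so the P-orbit of x has at least p^k points\<close>
  moreover obtain j where j: "card ?T = p ^ j"
    using cT divides_primepow_nat[OF p] by (metis dvd_triv_right)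
  ultimately have "p ^ k * p ^ j dvd p ^ a * m" using cS cE by (metis mult_dvd_mono dvd_refl)
  hence "k + j \<le> a"
    using prime_power_dvd_mult_coprime_imp_le[OF p \<open>\<not> p dvd m\<close>] by (simp add: power_add)
  moreover have "card ?orbP = p ^ (a - j)"
  proof -
    have "card ?orbP * p ^ j = p ^ (a - j) * p ^ j"
      using cT j \<open>k + j \<le> a\<close> by (simp add: power_add[symmetric])
    thus ?thesis using prime_gt_0_nat[OF p] by simp
  qed
  ultimately have "card E \<le> card ?orbP"
    using cE prime_gt_1_nat[OF p] by (simp add: power_increasing)
  moreover have "?orbP \<subseteq> E" using x PE.element_image unfolding orbit_def by blast
  moreover have "finite E" using cE prime_gt_0_nat[OF p] card_ge_0_finite by force
  ultimately have "?orbP = E" by (simp add: card_seteq)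
  thus ?thesis using y unfolding orbit_def by auto
qed

lemma BijGroup_commute_apply:
  assumes "f \<in> Bij V" "g \<in> Bij V" "f \<otimes>\<^bsub>BijGroup V\<^esub> g = g \<otimes>\<^bsub>BijGroup V\<^esub> f" "v \<in> V"
  shows "f (g v) = g (f v)"
proof -
  have "compose V f g v = compose V g f v" using assms(1-3) by (simp add: BijGroup_def)
  thus ?thesis using assms(4) by (simp add: compose_def)
qed

lemma finite_Bij:
  assumes "finite V"
  shows "finite (Bij V)"
proof -
  have "Bij V \<subseteq> V \<rightarrow>\<^sub>E V" by (auto simp: Bij_def PiE_iff extensional_def dest: bij_betwE)
  thus ?thesis using assms by (simp add: finite_PiE finite_subset)
qed

lemma group_action_BijGroup: "group_action (BijGroup V) V (\<lambda>g. g)"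
  unfolding group_action_def group_hom_def group_hom_axioms_def
  by (auto intro: homI simp: group_BijGroup)

lemma adj_rtrancl_within_edge:
  assumes deg: "\<forall>x y w. {x, y} \<in> E \<longrightarrow> {x, w} \<in> E \<longrightarrow> y = w"
    and ac: "{a, c} \<in> E" and path: "(a, z) \<in> {(u, v). adj E u v}\<^sup>*"
  shows "z \<in> {a, c}"
  using path
proof (induction rule: rtrancl_induct)
  case (step z u)
  hence "{z, u} \<in> E" by (simp add: adj_def)
  moreover have "{c, a} \<in> E" using ac by (simp add: insert_commute)
  ultimately show ?case using step.IH ac deg by blast
qed simp

lemma connected_graph_two_incident_edges:
  assumes "connected_graph V E" and "card V \<ge> 3"
  obtains x y w where "{x, y} \<in> E" "{x, w} \<in> E" "y \<noteq> w"
proof (rule ccontr)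
  assume "\<not> thesis"
  hence deg: "\<forall>x y w. {x, y} \<in> E \<longrightarrow> {x, w} \<in> E \<longrightarrow> y = w" using that by blast
  have path: "(u, v) \<in> {(u, v). adj E u v}\<^sup>*" if "u \<in> V" "v \<in> V" for u v
    using assms(1) that unfolding connected_graph_def by blast
  have "finite V" "\<not> card V \<le> Suc 0" using assms(2) card.infinite by force+
  then obtain a b where ab: "a \<in> V" "b \<in> V" "a \<noteq> b" using card_le_Suc0_iff_eq by blast
  obtain c where ac: "{a, c} \<in> E"
    using path[OF ab(1,2)] ab(3) by (induction rule: converse_rtrancl_induct) (auto simp: adj_def)
  have "V \<subseteq> {a, c}" using adj_rtrancl_within_edge[OF deg ac] path ab(1) by blast
  hence "card V \<le> card {a, c}" by (intro card_mono) auto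
  also have "\<dots> \<le> 2" by (simp add: card_insert_le_m1)
  finally show False using assms(2) by simp
qed

lemma graph_aut_image_edge:
  assumes "simple_graph V E" "g \<in> graph_aut V E" "e \<in> E"
  shows "g ` e \<in> E"
proof -
  have "e \<subseteq> V" "card e = 2" using assms(1,3) unfolding simple_graph_def by auto
  then obtain x y where xy: "e = {x, y}" "x \<in> V" "y \<in> V" by (auto simp: card_2_iff)
  hence "{g x, g y} \<in> E" using assms(2,3) unfolding graph_aut_def by blast
  thus ?thesis using xy by simp
qed

lemma simple_graph_finite_edges:
  assumes "simple_graph V E"
  shows "finite E"
proof -
  have "E \<subseteq> Pow V" "finite V" using assms unfolding simple_graph_def by auto
  thus ?thesis by (meson finite_Pow_iff finite_subset)
qed

lemma graph_aut_edge_perm_Bij: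
  assumes sg: "simple_graph V E" and g: "g \<in> graph_aut V E"
  shows "(\<lambda>e\<in>E. g ` e) \<in> Bij E"
proof -
  have maps: "(\<lambda>e\<in>E. g ` e) ` E \<subseteq> E" using graph_aut_image_edge[OF sg g] by auto
  have "inj_on g V" using g unfolding graph_aut_def Bij_def bij_betw_def by blast
  moreover have "\<forall>e\<in>E. e \<subseteq> V" using sg unfolding simple_graph_def by blast
  ultimately have inj: "inj_on (\<lambda>e\<in>E. g ` e) E" by (simp add: inj_on_def inj_on_image_eq_iff)
  have "(\<lambda>e\<in>E. g ` e) ` E = E"
    using endo_inj_surj[OF simple_graph_finite_edges[OF sg] maps inj] .
  thus ?thesis unfolding Bij_def bij_betw_def using inj by simp
qed

lemma graph_aut_edge_action:
  assumes sg: "simple_graph V E" and G: "subgroup G (BijGroup V)" "G \<subseteq> graph_aut V E"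
  shows "group_action (BijGroup V\<lparr>carrier := G\<rparr>) E (\<lambda>g. \<lambda>e\<in>E. g ` e)"
proof -
  have GBij: "G \<subseteq> Bij V" using subgroup.subset[OF G(1)] by (simp add: BijGroup_def)
  have EV: "\<forall>e\<in>E. e \<subseteq> V" using sg unfolding simple_graph_def by blast
  have "(\<lambda>e\<in>E. compose V g h ` e) = compose E (\<lambda>e\<in>E. g ` e) (\<lambda>e\<in>E. h ` e)"
    if "g \<in> G" "h \<in> G" for g h
  proof
    fix e
    show "(\<lambda>e\<in>E. compose V g h ` e) e = compose E (\<lambda>e\<in>E. g ` e) (\<lambda>e\<in>E. h ` e) e"
    proof (cases "e \<in> E")
      case True
      have "compose V g h ` e = g ` h ` e"
        using EV True by (force simp: compose_def)
      moreover have "h ` e \<in> E" using graph_aut_image_edge[OF sg] that G(2) True by blast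
      ultimately show ?thesis using True by (simp add: compose_def)
    qed (simp add: compose_def)
  qed
  hence "(\<lambda>g. \<lambda>e\<in>E. g ` e) \<in> hom (BijGroup V\<lparr>carrier := G\<rparr>) (BijGroup E)"
    using graph_aut_edge_perm_Bij[OF sg] G(2) GBij
    by (intro homI) (auto simp: BijGroup_def)
  thus ?thesis unfolding group_action_def group_hom_def group_hom_axioms_def
    using group.subgroup_imp_group[OF group_BijGroup G(1)] group_BijGroup by blast
qed

lemma commuting_perm_with_fixed_point_is_id:
  assumes h: "h \<in> Bij V" and v: "v \<in> V" "h v = v"
    and tr: "\<forall>x\<in>V. \<forall>y\<in>V. \<exists>g\<in>P. g x = y"
    and comm: "\<forall>g\<in>P. \<forall>u\<in>V. g (h u) = h (g u)"
  shows "h = (\<lambda>x\<in>V. x)"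
proof (rule extensionalityI)
  show "h \<in> extensional V" using h unfolding Bij_def by blast
  fix u assume u: "u \<in> V"
  then obtain g where g: "g \<in> P" "g v = u" using tr v(1) by blast
  have "g (h v) = h (g v)" using comm g(1) v(1) by blast
  thus "h u = (\<lambda>x\<in>V. x) u" using u v(2) g(2) by simp
qed simp

lemma commuting_perm_fixing_edge_fixes_all_edges:
  assumes EV: "\<forall>e\<in>E. e \<subseteq> V" and e: "e \<in> E" "h ` e = e" and f: "f \<in> E"
    and tr: "\<forall>e\<in>E. \<forall>f\<in>E. \<exists>g\<in>P. g ` e = f"
    and comm: "\<forall>g\<in>P. \<forall>u\<in>V. g (h u) = h (g u)"
  shows "h ` f = f"
proof -
  obtain g where g: "g \<in> P" "g ` e = f" using tr e(1) f by blast
  have "h ` f = (\<lambda>u. g (h u)) ` e"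
    using g comm EV e(1) unfolding g(2)[symmetric] by (force simp: image_image)
  also have "\<dots> = f" using e(2) g(2) by (simp add: image_image[symmetric])
  finally show ?thesis .
qed

lemma commuting_perm_fixing_edge_is_id:
  assumes sg: "simple_graph V E" and h: "h \<in> Bij V" and e: "e \<in> E" "h ` e = e"
    and nb: "{x, y} \<in> E" "{x, w} \<in> E" "y \<noteq> w"
    and trV: "\<forall>x\<in>V. \<forall>y\<in>V. \<exists>g\<in>P. g x = y"
    and trE: "\<forall>e\<in>E. \<forall>f\<in>E. \<exists>g\<in>P. g ` e = f"
    and comm: "\<forall>g\<in>P. \<forall>u\<in>V. g (h u) = h (g u)"
  shows "h = (\<lambda>x\<in>V. x)"
proof (cases "h x = x")
  case True
  moreover have "x \<in> V" using sg nb(1) unfolding simple_graph_def by blast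
  ultimately show ?thesis using commuting_perm_with_fixed_point_is_id[OF h _ _ trV comm] by blast
next
  case False
  have EV: "\<forall>e\<in>E. e \<subseteq> V" using sg unfolding simple_graph_def by blast
  \<comment> \<open>h fixes both edges through x but moves x, so h x = y and h x = w\<close>
  have "h ` {x, y} = {x, y}" "h ` {x, w} = {x, w}"
    using commuting_perm_fixing_edge_fixes_all_edges[OF EV e _ trE comm] nb(1,2) by auto
  hence "h x = y" "h x = w" using False by auto
  thus ?thesis using nb(3) by simp
qed

lemma central_element_semiregular:
  assumes sg: "simple_graph V E" and P: "subgroup P (BijGroup V)"
    and nb: "{x, y} \<in> E" "{x, w} \<in> E" "y \<noteq> w"
    and trV: "\<forall>x\<in>V. \<forall>y\<in>V. \<exists>g\<in>P. g x = y"
    and trE: "\<forall>e\<in>E. \<forall>f\<in>E. \<exists>g\<in>P. g ` e = f"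
    and z: "z \<in> P" "z \<noteq> \<one>\<^bsub>BijGroup V\<^esub>" "\<forall>g\<in>P. g \<otimes>\<^bsub>BijGroup V\<^esub> z = z \<otimes>\<^bsub>BijGroup V\<^esub> g"
  shows "semiregular_on_vertices V z \<and> semiregular_on_edges V E z"
proof -
  interpret B: group "BijGroup V" by (rule group_BijGroup)
  have PBij: "P \<subseteq> Bij V" using subgroup.subset[OF P] by (simp add: BijGroup_def)
  have one: "\<one>\<^bsub>BijGroup V\<^esub> = (\<lambda>x\<in>V. x)" by (simp add: BijGroup_def)
  have hP: "z [^]\<^bsub>BijGroup V\<^esub> k \<in> P" for k :: nat
    using monoid.nat_pow_closed[OF group.is_monoid[OF B.subgroup_imp_group[OF P]], of z k] z(1)
    unfolding B.nat_pow_consistent[of z k P] by simp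
  hence h: "z [^]\<^bsub>BijGroup V\<^esub> k \<in> Bij V" for k :: nat using PBij by blast
  have comm: "\<forall>g\<in>P. \<forall>u\<in>V. g ((z [^]\<^bsub>BijGroup V\<^esub> k) u) = (z [^]\<^bsub>BijGroup V\<^esub> k) (g u)"
    for k :: nat
  proof (intro ballI)
    fix g u assume g: "g \<in> P" and u: "u \<in> V"
    have zg: "z \<otimes>\<^bsub>BijGroup V\<^esub> g = g \<otimes>\<^bsub>BijGroup V\<^esub> z" using z(3) g by simp
    have "z [^]\<^bsub>BijGroup V\<^esub> k \<otimes>\<^bsub>BijGroup V\<^esub> g = g \<otimes>\<^bsub>BijGroup V\<^esub> z [^]\<^bsub>BijGroup V\<^esub> k"
      using B.group_commutes_pow[OF zg] subgroup.mem_carrier[OF P] z(1) g by blast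
    moreover have "g \<in> Bij V" using g PBij by blast
    ultimately show "g ((z [^]\<^bsub>BijGroup V\<^esub> k) u) = (z [^]\<^bsub>BijGroup V\<^esub> k) (g u)"
      using BijGroup_commute_apply[OF h _ _ u] by metis
  qed
  have "\<forall>k::nat. \<forall>v\<in>V. (z [^]\<^bsub>BijGroup V\<^esub> k) v = v \<longrightarrow> z [^]\<^bsub>BijGroup V\<^esub> k = \<one>\<^bsub>BijGroup V\<^esub>"
    using commuting_perm_with_fixed_point_is_id[OF h _ _ trV comm] one by simp
  moreover have "\<forall>k::nat. \<forall>e\<in>E. (z [^]\<^bsub>BijGroup V\<^esub> k) ` e = e \<longrightarrow> z [^]\<^bsub>BijGroup V\<^esub> k = \<one>\<^bsub>BijGroup V\<^esub>"
    using commuting_perm_fixing_edge_is_id[OF sg h _ _ nb trV trE comm] one by simp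
  ultimately show ?thesis
    unfolding semiregular_on_vertices_def semiregular_on_edges_def using z(2) by blast
qed

theorem corollary2p13:
  fixes p :: nat and V :: "'a set" and E :: "'a set set" and G :: "('a \<Rightarrow> 'a) set"
  assumes "Factorial_Ring.prime p"
    and "simple_graph V E" and "connected_graph V E" and "card V \<ge> 3"
    and "is_prime_power p (card V)" and "is_prime_power p (card E)"
    and "subgroup G (BijGroup V)" and "G \<subseteq> graph_aut V E"
    and "\<forall>x\<in>V. \<forall>y\<in>V. \<exists>g\<in>G. g x = y"
    and "\<forall>e\<in>E. \<forall>f\<in>E. \<exists>g\<in>G. g ` e = f"
  shows "\<exists>g\<in>G. semiregular_on_vertices V g \<and> semiregular_on_edges V E g"
proof -
  note p = assms(1) and sg = assms(2) and G = assms(7)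
  let ?B = "BijGroup V"
  interpret GG: group "?B\<lparr>carrier := G\<rparr>" using group.subgroup_imp_group[OF group_BijGroup G] .
  interpret GV: group_action "?B\<lparr>carrier := G\<rparr>" V "\<lambda>g. g"
    using group_action.induced_action[OF group_action_BijGroup G] .
  interpret GE: group_action "?B\<lparr>carrier := G\<rparr>" E "\<lambda>g. \<lambda>e\<in>E. g ` e"
    using graph_aut_edge_action[OF sg G assms(8)] .
  have "finite G"
    using subgroup.subset[OF G] finite_Bij sg
    by (auto simp: simple_graph_def BijGroup_def intro: finite_subset)
  then obtain P a m where P: "subgroup P (?B\<lparr>carrier := G\<rparr>)" "card P = p ^ a"
      and ord: "order (?B\<lparr>carrier := G\<rparr>) = p ^ a * m" "\<not> p dvd m"
    using GG.obtain_sylow_subgroup[OF p] by auto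
  obtain k l where "card V = p ^ k" "card E = p ^ l"
    using assms(5,6) by (auto simp: is_prime_power_def)
  hence trV: "\<forall>x\<in>V. \<forall>y\<in>V. \<exists>g\<in>P. g x = y"
    and trE: "\<forall>e\<in>E. \<forall>f\<in>E. \<exists>g\<in>P. g ` e = f"
    using GV.sylow_subgroup_transitive[OF p ord P] GE.sylow_subgroup_transitive[OF p ord P]
      assms(9,10) by (auto 0 3)
  have PB: "subgroup P ?B" using group.incl_subgroup[OF group_BijGroup G P(1)] by simp
  obtain x y w where nb: "{x, y} \<in> E" "{x, w} \<in> E" "y \<noteq> w"
    using connected_graph_two_incident_edges[OF assms(3,4)] by blast
  have "x \<in> V" "y \<in> V" "x \<noteq> y" using sg nb(1) by (auto simp: simple_graph_def)
  then obtain g where "g \<in> P" "g x \<noteq> x" using trV by metis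
  hence "P \<noteq> {\<one>\<^bsub>?B\<^esub>}" using \<open>x \<in> V\<close> by (auto simp: BijGroup_def)
  then obtain z where z: "z \<in> P" "z \<noteq> \<one>\<^bsub>?B\<^esub>" "\<forall>g\<in>P. g \<otimes>\<^bsub>?B\<^esub> z = z \<otimes>\<^bsub>?B\<^esub> g"
    using group.prime_power_order_center_nontrivial[OF group.subgroup_imp_group[OF group_BijGroup PB]]
      p P(2) by (auto simp: order_def)
  have "z \<in> G" using z(1) subgroup.subset[OF P(1)] by auto
  thus ?thesis using central_element_semiregular[OF sg PB nb trV trE z] by blast
qed

end
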